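(* Consider the sig-cGA with parameter $\varepsilon>3$ optimizing $\mathrm{DLB}:\{0,1\}^n\to\mathbb{R}$. For any $k$, the probability that during the first $k$ iterations at least one frequency decreases is at most $k n^{1-\varepsilon/3}\log_2 k$.
   Context: Let $n$ be an even positive integer. For $x\in\{0,1\}^n$ consider the blocks $(x_{2\ell+1},x_{2\ell+2})$, $\ell=0,\dots,\frac n2-1$. If $x\neq(1,\dots,1)$, let $m$ be the smallest $\ell$ with $x_{2\ell+1}\neq 1$ or $x_{2\ell+2}\neq 1$, and define $\mathrm{DLB}(x)=2m+1$ if $x_{2m+1}+x_{2m+2}=0$ and $\mathrm{DLB}(x)=2m$ if $x_{2m+1}+x_{2m+2}=1$; set $\mathrm{DLB}(1,\dots,1)=n$. Significance function: for $\varepsilon,\mu>0$ let $s(\varepsilon,\mu)=\varepsilon\max\{\sqrt{\mu\log n},\log n\}$. For $H\in\{0,1\}^*$, $H[k]$ denotes the string of its last $k$ bits and $\|H[k]\|_0$, $\|H[k]\|_1$ the numbers of zeros and ones in it. For $p\in\{\frac1n,\frac12,1-\frac1n\}$, $\mathrm{sig}_\varepsilon(p,H)=\textsc{up}$ if $p\in\{\frac1n,\frac12\}$ and there is $m\in\mathbb{N}$ with $\|H[2^m]\|_1\ge 2^m p+s(\varepsilon,2^m p)$; $=\textsc{down}$ if $p\in\{\frac12,1-\frac1n\}$ and there is $m\in\mathbb{N}$ with $\|H[2^m]\|_0\ge 2^m(1-p)+s(\varepsilon,2^m(1-p))$; and $=\textsc{stay}$ otherwise. The sig-cGA with parameter $\varepsilon$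 maximizing $f$: initially $\tau^{(0)}_i=\frac12$ and $H_i=\emptyset$ for all $i\in[1..n]$. In iteration $t$, sample two individuals $x,y$ independently, each bit $j$ being $1$ independently with probability $\tau^{(t)}_j$; let the winner $z$ be the one with larger $f$-value (chosen uniformly at random in case of a tie). For each $i$: append $z_i$ to $H_i$; if $\mathrm{sig}_\varepsilon(\tau^{(t)}_i,H_i)=\textsc{up}$ set $\tau^{(t+1)}_i=1-\frac1n$, if it is $\textsc{down}$ set $\tau^{(t+1)}_i=\frac1n$, otherwise $\tau^{(t+1)}_i=\tau^{(t)}_i$; if $\tau^{(t+1)}_i\ne\tau^{(t)}_i$, reset $H_i=\emptyset$. A frequency decreases in iteration $t$ if $\tau^{(t+1)}_i<\tau^{(t)}_i$ for some $i$. *)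

theory Defs
  imports "HOL-Probability.Probability"
begin

text \<open>Bit strings of length n are bool lists (True = 1); bit x_i of the paper is x ! (i-1).\<close>

definition DLB :: "nat \<Rightarrow> bool list \<Rightarrow> nat" where
  "DLB n x = (if (\<forall>i<n. x ! i) then n else
     (let m = (LEAST l. l < n div 2 \<and> \<not> (x ! (2*l) \<and> x ! (2*l+1))) in
      if \<not> x ! (2*m) \<and> \<not> x ! (2*m+1) then 2*m+1 else 2*m))"

definition sfun :: "nat \<Rightarrow> real \<Rightarrow> real \<Rightarrow> real" where
  "sfun n eps mu = eps * max (sqrt (mu * ln (real n))) (ln (real n))"

definition ones_last :: "bool list \<Rightarrow> nat \<Rightarrow> nat" where
  "ones_last H k = length (filter (\<lambda>b. b) (drop (length H - k) H))"
definition zeros_last :: "bool list \<Rightarrow> nat \<Rightarrow> nat" where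
  "zeros_last H k = length (filter (\<lambda>b. \<not> b) (drop (length H - k) H))"

datatype sigres = Up | Down | Stay

definition sig :: "nat \<Rightarrow> real \<Rightarrow> real \<Rightarrow> bool list \<Rightarrow> sigres" where
  "sig n eps p H =
     (if (p = 1 / real n \<or> p = 1/2) \<and>
         (\<exists>m::nat. 2^m \<le> length H \<and>
            real (ones_last H (2^m)) \<ge> 2^m * p + sfun n eps (2^m * p))
      then Up
      else if (p = 1/2 \<or> p = 1 - 1 / real n) \<and>
         (\<exists>m::nat. 2^m \<le> length H \<and>
            real (zeros_last H (2^m)) \<ge> 2^m * (1 - p) + sfun n eps (2^m * (1 - p)))
      then Down
      else Stay)"

fun sample :: "real list \<Rightarrow> bool list pmf" where
  "sample [] = return_pmf []"
| "sample (p # ps) = bind_pmf (bernoulli_pmf p) (\<lambda>b. map_pmf (\<lambda>bs. b # bs) (sample ps))"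

definition winner :: "(bool list \<Rightarrow> nat) \<Rightarrow> bool list \<Rightarrow> bool list \<Rightarrow> bool list pmf" where
  "winner f x y = (if f x > f y then return_pmf x else if f y > f x then return_pmf y
                   else map_pmf (\<lambda>b. if b then x else y) (bernoulli_pmf (1/2)))"

definition upd :: "nat \<Rightarrow> real \<Rightarrow> real \<Rightarrow> bool list \<Rightarrow> bool \<Rightarrow> real \<times> bool list" where
  "upd n eps tau H zi =
     (let H' = H @ [zi];
          tau' = (case sig n eps tau H' of Up \<Rightarrow> 1 - 1 / real n | Down \<Rightarrow> 1 / real n | Stay \<Rightarrow> tau)
      in (tau', if tau' \<noteq> tau then [] else H'))"

definition sig_cga_step :: "nat \<Rightarrow> real \<Rightarrow> real list \<times> bool list list
      \<Rightarrow> ((real list \<times> bool list list) \<times> bool) pmf" where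
  "sig_cga_step n eps st =
     (case st of (taus, Hs) \<Rightarrow>
       bind_pmf (sample taus) (\<lambda>x. bind_pmf (sample taus) (\<lambda>y.
       bind_pmf (winner (DLB n) x y) (\<lambda>z.
         let new = map (\<lambda>i. upd n eps (taus ! i) (Hs ! i) (z ! i)) [0..<n];
             taus' = map fst new; Hs' = map snd new
         in return_pmf ((taus', Hs'), (\<exists>i<n. taus' ! i < taus ! i))))))"

definition sig_cga_init :: "nat \<Rightarrow> real list \<times> bool list list" where
  "sig_cga_init n = (replicate n (1/2), replicate n [])"

fun sig_cga_run :: "nat \<Rightarrow> real \<Rightarrow> nat \<Rightarrow> ((real list \<times> bool list list) \<times> bool) pmf" where
  "sig_cga_run n eps 0 = return_pmf (sig_cga_init n, False)"
| "sig_cga_run n eps (Suc k) =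
     bind_pmf (sig_cga_run n eps k) (\<lambda>(st, d).
       map_pmf (\<lambda>(st', d'). (st', d \<or> d')) (sig_cga_step n eps st))"

end

theory Submission
  imports Defs
begin

text \<open>
  As long as no frequency has decreased, every frequency is 1/2 or 1 - 1/n, hence at least 1/2.
  DLB compares the two samples block by block from the left: blocks in which both samples are
  11 are skipped and the first other block decides. A bit in the deciding block is 0 in the
  winner with probability at most 1 - \<tau>_i, by a direct computation that uses that both
  frequencies of the block are at least 1/2; bits behind it are copied from one of the samples.
  So each new history entry is 0 with probability at most 1 - \<tau>_i, and
  exp(\<lambda> Z_l) / (\<tau> + (1 - \<tau>) exp \<lambda>)^l, with Z_l the number of zeros among the
  last l history entries, is a supermartingale for every \<lambda> \<ge> 0.
  A decrease of \<tau>_i in iteration t needs 2^m (1 - \<tau>_i) + s zeros among the last 2^m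
  entries for some 1 \<le> m \<le> log_2 t. Markov's inequality for the supermartingale with
  Chernoff's choice of \<lambda> bounds the probability of this by n powr (-\<epsilon>/3), and a union
  bound over the k iterations, the n positions and the log_2 k scales m gives the theorem.
\<close>

section \<open>Selection on DLB does not favour zeros\<close>

definition block_score :: "bool \<Rightarrow> bool \<Rightarrow> nat" where
  "block_score a b = (if a \<and> b then 2 else if \<not> a \<and> \<not> b then 1 else 0)"

lemma DLB_Cons_Cons_not_ones:
  assumes "\<not> (a \<and> b)"
  shows "DLB (Suc (Suc n)) (a # b # x) = block_score a b"
proof -
  define P where
    "P l \<longleftrightarrow> l < Suc (Suc n) div 2 \<and> \<not> ((a # b # x) ! (2*l) \<and> (a # b # x) ! (2*l+1))" for l
  have "\<not> (\<forall>i<Suc (Suc n). (a # b # x) ! i)"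
  proof
    assume "\<forall>i<Suc (Suc n). (a # b # x) ! i"
    then have "(a # b # x) ! 0" "(a # b # x) ! 1" by auto
    with assms show False by simp
  qed
  then have "DLB (Suc (Suc n)) (a # b # x) =
      (if \<not> (a # b # x) ! (2 * Least P) \<and> \<not> (a # b # x) ! (2 * Least P + 1)
       then 2 * Least P + 1 else 2 * Least P)"
    unfolding DLB_def Let_def P_def[symmetric] by (simp only: if_False)
  moreover have "Least P = 0" using assms by (intro Least_eq_0) (simp add: P_def)
  ultimately show ?thesis using assms by (simp add: block_score_def)
qed

lemma DLB_Cons_Cons_ones:
  assumes "even n" "length x = n" "\<not> (\<forall>i<n. x ! i)"
  shows "DLB (Suc (Suc n)) (True # True # x) = 2 + DLB n x"
proof -
  define P where
    "P l \<longleftrightarrow> l < Suc (Suc n) div 2 \<and> \<not> ((True # True # x) ! (2*l) \<and> (True # True # x) ! (2*l+1))"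
    for l
  define Q where "Q l \<longleftrightarrow> l < n div 2 \<and> \<not> (x ! (2*l) \<and> x ! (2*l+1))" for l
  from assms(3) obtain i where i: "i < n" "\<not> x ! i" by auto
  have "\<not> (\<forall>i<Suc (Suc n). (True # True # x) ! i)"
  proof
    assume "\<forall>i<Suc (Suc n). (True # True # x) ! i"
    then have "(True # True # x) ! Suc (Suc i)" using i(1) by blast
    with i(2) show False by simp
  qed
  then have "DLB (Suc (Suc n)) (True # True # x) =
      (if \<not> (True # True # x) ! (2 * Least P) \<and> \<not> (True # True # x) ! (2 * Least P + 1)
       then 2 * Least P + 1 else 2 * Least P)"
    unfolding DLB_def Let_def P_def[symmetric] by (simp only: if_False)
  moreover have "DLB n x =
      (if \<not> x ! (2 * Least Q) \<and> \<not> x ! (2 * Least Q + 1) then 2 * Least Q + 1 else 2 * Least Q)"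
    using assms(3) unfolding DLB_def Let_def Q_def[symmetric] by (simp only: if_False)
  moreover have "Least P = Suc (Least Q)"
  proof (rule Least_Suc2[of P "Suc (i div 2)" Q "i div 2"])
    have "i div 2 < n div 2" using i assms(1) by (auto elim!: evenE)
    moreover have "i = 2 * (i div 2) \<or> i = 2 * (i div 2) + 1" by presburger
    ultimately show "Q (i div 2)" using i unfolding Q_def by auto
    have "Suc (Suc n) div 2 = Suc (n div 2)" by simp
    then show "\<forall>k. P (Suc k) = Q k" unfolding P_def Q_def by (simp add: numeral_eq_Suc)
    then show "P (Suc (i div 2))" using \<open>Q (i div 2)\<close> by simp
  qed (simp add: P_def)
  ultimately show ?thesis by (simp add: numeral_eq_Suc)
qed

lemma DLB_Cons_Cons:
  assumes "even n" "length x = n"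
  shows "DLB (Suc (Suc n)) (a # b # x) = (if a \<and> b then 2 + DLB n x else block_score a b)"
proof (cases "a \<and> b \<and> (\<forall>i<n. x ! i)")
  case True
  then have "\<forall>i<Suc (Suc n). (a # b # x) ! i" by (auto simp: less_Suc_eq_0_disj)
  with True show ?thesis by (simp add: DLB_def)
next
  case False
  then consider "\<not> (a \<and> b)" | "a" "b" "\<not> (\<forall>i<n. x ! i)" by blast
  then show ?thesis by cases (auto simp: DLB_Cons_Cons_not_ones DLB_Cons_Cons_ones assms)
qed

definition block_winner :: "bool \<Rightarrow> bool \<Rightarrow> bool \<Rightarrow> bool \<Rightarrow> bool pmf" where
  "block_winner x1 x2 y1 y2 =
     (if block_score x1 x2 > block_score y1 y2 then return_pmf True
      else if block_score y1 y2 > block_score x1 x2 then return_pmf False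
      else bernoulli_pmf (1/2))"

lemma winner_DLB_Cons_Cons:
  assumes "even n" "length x = n" "length y = n"
  shows "winner (DLB (Suc (Suc n))) (x1 # x2 # x) (y1 # y2 # y) =
    (if x1 \<and> x2 \<and> y1 \<and> y2 then map_pmf (\<lambda>z. True # True # z) (winner (DLB n) x y)
     else map_pmf (\<lambda>c. if c then x1 # x2 # x else y1 # y2 # y) (block_winner x1 x2 y1 y2))"
  by (cases x1; cases x2; cases y1; cases y2)
     (auto simp: winner_def block_winner_def block_score_def DLB_Cons_Cons[OF assms(1,2)]
        DLB_Cons_Cons[OF assms(1,3)] map_pmf_comp intro!: map_pmf_cong)

lemma length_sample: "x \<in> set_pmf (sample r) \<Longrightarrow> length x = length r"
  by (induction r arbitrary: x) auto

lemma map_pmf_nth_sample: "j < length r \<Longrightarrow> map_pmf (\<lambda>x. x ! j) (sample r) = bernoulli_pmf (r ! j)"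
proof (induction r arbitrary: j)
  case (Cons p r)
  then show ?case
    by (cases j) (simp_all add: map_bind_pmf map_pmf_comp bind_return_pmf' flip: map_pmf_def)
qed simp

lemma bind_pmf_commute_two:
  "bind_pmf A (\<lambda>x. bind_pmf B (\<lambda>y. bind_pmf C (\<lambda>z. F x y z))) =
   bind_pmf B (\<lambda>y. bind_pmf C (\<lambda>z. bind_pmf A (\<lambda>x. F x y z)))"
  by (subst bind_commute_pmf) (simp add: bind_commute_pmf[of A C])

definition winner_pmf :: "nat \<Rightarrow> real list \<Rightarrow> bool list pmf" where
  "winner_pmf n taus = bind_pmf (sample taus) (\<lambda>x. bind_pmf (sample taus) (\<lambda>y. winner (DLB n) x y))"

lemma bind_sample_winner_DLB_Cons_Cons:
  assumes "even n" "length r = n"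
  shows "bind_pmf (sample r) (\<lambda>x. bind_pmf (sample r) (\<lambda>y.
            winner (DLB (Suc (Suc n))) (x1 # x2 # x) (y1 # y2 # y))) =
      (if x1 \<and> x2 \<and> y1 \<and> y2 then map_pmf (\<lambda>z. True # True # z) (winner_pmf n r)
       else bind_pmf (block_winner x1 x2 y1 y2)
             (\<lambda>c. map_pmf (\<lambda>t. if c then x1 # x2 # t else y1 # y2 # t) (sample r)))"
proof (cases "x1 \<and> x2 \<and> y1 \<and> y2")
  case True
  then show ?thesis
    by (auto simp: winner_DLB_Cons_Cons assms length_sample winner_pmf_def map_bind_pmf
        intro!: bind_pmf_cong)
next
  case False
  have "bind_pmf (sample r) (\<lambda>x. bind_pmf (sample r) (\<lambda>y.
          winner (DLB (Suc (Suc n))) (x1 # x2 # x) (y1 # y2 # y))) =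
      bind_pmf (sample r) (\<lambda>x. bind_pmf (sample r) (\<lambda>y. bind_pmf (block_winner x1 x2 y1 y2)
        (\<lambda>c. return_pmf (if c then x1 # x2 # x else y1 # y2 # y))))"
    using False
    by (auto simp: winner_DLB_Cons_Cons assms length_sample map_pmf_def intro!: bind_pmf_cong)
  also have "\<dots> = bind_pmf (block_winner x1 x2 y1 y2)
      (\<lambda>c. map_pmf (\<lambda>t. if c then x1 # x2 # t else y1 # y2 # t) (sample r))"
  proof (rule trans[OF bind_pmf_commute_two[symmetric]], intro bind_pmf_cong refl)
    fix c :: bool
    show "bind_pmf (sample r) (\<lambda>x. bind_pmf (sample r) (\<lambda>y.
            return_pmf (if c then x1 # x2 # x else y1 # y2 # y))) =
          map_pmf (\<lambda>t. if c then x1 # x2 # t else y1 # y2 # t) (sample r)"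
      by (cases c) (simp_all add: map_pmf_def)
  qed
  finally show ?thesis unfolding if_not_P[OF False] .
qed

lemma winner_pmf_Cons_Cons:
  assumes "even n" "length r = n"
  shows "winner_pmf (Suc (Suc n)) (a # b # r) =
    bind_pmf (bernoulli_pmf a) (\<lambda>x1. bind_pmf (bernoulli_pmf b) (\<lambda>x2.
    bind_pmf (bernoulli_pmf a) (\<lambda>y1. bind_pmf (bernoulli_pmf b) (\<lambda>y2.
      if x1 \<and> x2 \<and> y1 \<and> y2 then map_pmf (\<lambda>z. True # True # z) (winner_pmf n r)
      else bind_pmf (block_winner x1 x2 y1 y2)
             (\<lambda>c. map_pmf (\<lambda>t. if c then x1 # x2 # t else y1 # y2 # t) (sample r))))))"
proof -
  have "winner_pmf (Suc (Suc n)) (a # b # r) =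
    bind_pmf (bernoulli_pmf a) (\<lambda>x1. bind_pmf (bernoulli_pmf b) (\<lambda>x2.
    bind_pmf (bernoulli_pmf a) (\<lambda>y1. bind_pmf (bernoulli_pmf b) (\<lambda>y2.
    bind_pmf (sample r) (\<lambda>x. bind_pmf (sample r) (\<lambda>y.
      winner (DLB (Suc (Suc n))) (x1 # x2 # x) (y1 # y2 # y)))))))"
    unfolding winner_pmf_def
    by (simp add: map_pmf_def bind_assoc_pmf bind_return_pmf bind_pmf_commute_two[of "sample r"])
  then show ?thesis
    by (simp only: bind_sample_winner_DLB_Cons_Cons[OF assms])
qed

lemma pmf_winner_pmf_block_False_le:
  assumes "even n" "length r = n" "i < 2" "1/2 \<le> a" "a \<le> 1" "1/2 \<le> b" "b \<le> 1"
  shows "pmf (map_pmf (\<lambda>z. z ! i) (winner_pmf (Suc (Suc n)) (a # b # r))) False \<le> 1 - [a, b] ! i"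
proof -
  define p q where "p = [a, b] ! i" and "q = [b, a] ! i"
  have "pmf (map_pmf (\<lambda>z. z ! i) (winner_pmf (Suc (Suc n)) (a # b # r))) False =
     (1 - p) - p * (1 - p) * (q - (1 - q)^2)"
    using assms unfolding p_def q_def
    by (cases i; simp add: winner_pmf_Cons_Cons map_bind_pmf map_pmf_comp pmf_bind
        block_winner_def block_score_def less_Suc_eq; simp add: field_simps power2_eq_square)
  moreover have "1/2 \<le> p" "p \<le> 1" "1/2 \<le> q" "q \<le> 1"
    using assms(3-7) unfolding p_def q_def by (auto simp: less_2_cases_iff)
  moreover from this have "(1 - q)^2 \<le> q" \<comment> \<open>the only use of frequencies \<open>\<ge> 1/2\<close>\<close>
    using mult_right_mono[of "1 - q" 1 "1 - q"] by (simp add: power2_eq_square)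
  ultimately show ?thesis unfolding p_def[symmetric] by (simp add: mult_nonneg_nonneg)
qed

lemma pmf_bind_le:
  assumes "\<And>y. y \<in> set_pmf M \<Longrightarrow> pmf (f y) x \<le> c"
  shows "pmf (bind_pmf M f) x \<le> c"
  unfolding pmf_bind
  by (rule measure_pmf.integral_le_const)
     (auto intro!: measure_pmf.integrable_const_bound[where B=1] AE_pmfI assms simp: pmf_le_1)

lemma pmf_winner_pmf_nth_Suc_Suc_False_le:
  assumes "even n" "length r = n" "j < n" "0 \<le> r ! j" "r ! j \<le> 1"
    and tail: "pmf (map_pmf (\<lambda>z. z ! j) (winner_pmf n r)) False \<le> 1 - r ! j"
  shows "pmf (map_pmf (\<lambda>z. z ! Suc (Suc j)) (winner_pmf (Suc (Suc n)) (a # b # r))) False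
     \<le> 1 - r ! j"
proof -
  have "map_pmf (\<lambda>z. z ! Suc (Suc j)) (winner_pmf (Suc (Suc n)) (a # b # r)) =
    bind_pmf (bernoulli_pmf a) (\<lambda>x1. bind_pmf (bernoulli_pmf b) (\<lambda>x2.
    bind_pmf (bernoulli_pmf a) (\<lambda>y1. bind_pmf (bernoulli_pmf b) (\<lambda>y2.
      if x1 \<and> x2 \<and> y1 \<and> y2 then map_pmf (\<lambda>z. z ! j) (winner_pmf n r)
      else bernoulli_pmf (r ! j)))))"
    using assms(1-3)
    by (auto simp: winner_pmf_Cons_Cons map_bind_pmf map_pmf_comp map_pmf_nth_sample intro!: bind_pmf_cong)
  then show ?thesis
    using assms(4,5) tail by (auto intro!: pmf_bind_le)
qed

lemma pmf_winner_pmf_nth_False_le: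
  assumes "even (length taus)" "\<forall>t\<in>set taus. 1/2 \<le> t \<and> t \<le> 1" "i < length taus"
  shows "pmf (map_pmf (\<lambda>z. z ! i) (winner_pmf (length taus) taus)) False \<le> 1 - taus ! i"
  using assms
proof (induction taus arbitrary: i rule: induct_list012)
  case (3 a b r)
  have r: "even (length r)" "\<forall>t\<in>set r. 1/2 \<le> t \<and> t \<le> 1" using "3.prems" by auto
  consider "i < 2" | j where "i = Suc (Suc j)" "j < length r"
    using "3.prems"(3) by (metis Suc_less_SucD length_Cons less_2_cases_iff not_less_eq nat.exhaust_sel)
  then show ?case
  proof cases
    case 1
    then show ?thesis
      using pmf_winner_pmf_block_False_le[OF r(1) refl 1] "3.prems"(2) by (auto simp: less_2_cases_iff)
  next
    case (2 j)
    have "1/2 \<le> r ! j" "r ! j \<le> 1" using r(2) nth_mem[OF 2(2)] by auto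
    then show ?thesis
      using pmf_winner_pmf_nth_Suc_Suc_False_le[OF r(1) refl 2(2)] "3.IH"(1)[OF r 2(2)] 2(1)
      by simp
  qed
qed auto

section \<open>An exponential supermartingale and Chernoff's bound\<close>

text \<open>
  \<open>p + (1 - p) * exp lam\<close> is the moment generating function of a 0-bit under
  \<open>bernoulli_pmf p\<close>, so \<open>exp_mart lam p H l\<close> is Chernoff's normalised exponential of the
  number of zeros among the last \<open>l\<close> bits of \<open>H\<close>.
\<close>

definition exp_mart :: "real \<Rightarrow> real \<Rightarrow> bool list \<Rightarrow> nat \<Rightarrow> real" where
  "exp_mart lam p H l = exp (lam * real (zeros_last H l)) / (p + (1 - p) * exp lam) ^ l"

lemma exp_mart_nonneg:
  assumes "0 \<le> p" "p \<le> 1"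
  shows "0 \<le> exp_mart lam p H l"
proof -
  have "0 < p + (1 - p) * exp lam"
    using assms by (cases "p = 1") (auto intro: add_nonneg_pos)
  then show ?thesis unfolding exp_mart_def by simp
qed

lemma exp_mart_snoc:
  assumes "l \<le> length H"
  shows "exp_mart lam p (H @ [b]) (Suc l) = exp_mart lam p H l * exp_mart lam p [b] 1"
proof -
  have "zeros_last (H @ [b]) (Suc l) = zeros_last H l + zeros_last [b] 1"
    using assms unfolding zeros_last_def by (simp add: drop_append)
  moreover have "exp (lam * real (x + y)) = exp (lam * real x) * exp (lam * real y)" for x y
    by (simp add: distrib_left exp_add)
  ultimately show ?thesis
    unfolding exp_mart_def by simp
qed

lemma nn_integral_exp_mart_le_1:
  fixes B :: "bool pmf"
  assumes "pmf B False \<le> 1 - p" "p \<le> 1" "0 \<le> lam"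
  shows "(\<integral>\<^sup>+b. ennreal (exp_mart lam p [b] 1) \<partial>B) \<le> 1"
proof -
  define c where "c = p + (1 - p) * exp lam"
  have "(1 - p) * 1 \<le> (1 - p) * exp lam" using assms by (intro mult_left_mono) auto
  then have c: "1 \<le> c" unfolding c_def by (simp add: algebra_simps)
  have "(\<integral>\<^sup>+b. ennreal (exp_mart lam p [b] 1) \<partial>B) =
      (\<Sum>b\<in>UNIV. ennreal (exp_mart lam p [b] 1) * ennreal (pmf B b))"
    by (rule nn_integral_measure_pmf_support) auto
  also have "\<dots> = ennreal (1 / c) * ennreal (pmf B True) + ennreal (exp lam / c) * ennreal (pmf B False)"
    by (simp add: UNIV_bool exp_mart_def zeros_last_def c_def add.commute)
  also have "\<dots> = ennreal ((pmf B True + exp lam * pmf B False) / c)"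
    using c by (simp add: ennreal_mult' [symmetric] ennreal_plus [symmetric] add_divide_distrib del: ennreal_plus)
  also have "\<dots> \<le> 1"
  proof -
    have "(exp lam - 1) * pmf B False \<le> (exp lam - 1) * (1 - p)"
      using assms by (intro mult_left_mono) auto
    then have "pmf B True + exp lam * pmf B False \<le> c"
      unfolding c_def by (simp add: pmf_False_conv_True algebra_simps)
    then show ?thesis using c by (simp add: ennreal_le_1 del: ennreal_1)
  qed
  finally show ?thesis .
qed

lemma ln_one_plus_ge_rational:
  fixes x :: real
  assumes "0 \<le> x"
  shows "2 * x / (2 + x) \<le> ln (1 + x)"
proof -
  define f where "f t = ln (1 + t) - 2 * t / (2 + t)" for t :: real
  have "f 0 \<le> f x"
  proof (rule DERIV_nonneg_imp_nondecreasing[OF assms])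
    fix t :: real assume t: "0 \<le> t"
    have "(f has_real_derivative 1 / (1 + t) - (2 * (2 + t) - 2 * t) / ((2 + t) * (2 + t))) (at t)"
      unfolding f_def using t by (intro derivative_eq_intros refl) auto
    moreover have "(2 * (2 + t) - 2 * t) / ((2 + t) * (2 + t)) \<le> 1 / (1 + t)"
    proof -
      have "4 * (1 + t) \<le> (2 + t) * (2 + t)" by (simp add: algebra_simps)
      then show ?thesis using t by (simp add: divide_simps)
    qed
    ultimately show "\<exists>y. (f has_real_derivative y) (at t) \<and> 0 \<le> y"
      by auto
  qed
  then show ?thesis unfolding f_def by simp
qed

lemma chernoff_exponent_ge:
  fixes eps L mu s :: real
  assumes "1 \<le> eps" "0 < L" "0 < mu" "eps * L \<le> s" "eps * sqrt (mu * L) \<le> s"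
  shows "eps * L / 3 \<le> ln (1 + s / mu) * (mu + s) - s"
proof -
  define \<delta> where "\<delta> = s / mu"
  have s: "0 < s" using assms by (smt (verit) mult_pos_pos)
  then have \<delta>: "0 < \<delta>" unfolding \<delta>_def using assms(3) by simp
  have "2 * \<delta> / (2 + \<delta>) * (mu + s) \<le> ln (1 + \<delta>) * (mu + s)"
    using ln_one_plus_ge_rational[of \<delta>] \<delta> s assms(3) by (intro mult_right_mono) auto
  moreover have "2 * \<delta> / (2 + \<delta>) * (mu + s) = s + s * \<delta> / (2 + \<delta>)"
    unfolding \<delta>_def using assms(3) s by (simp add: field_simps)
  moreover have "eps * L / 3 \<le> s * \<delta> / (2 + \<delta>)"
  proof (cases "1 \<le> \<delta>")
    case True
    then have "s / 3 \<le> s * \<delta> / (2 + \<delta>)" using s by (simp add: field_simps)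
    then show ?thesis using assms(4) by linarith
  next
    case False
    have "eps * L \<le> eps^2 * L" using assms(1,2) by (simp add: power2_eq_square)
    also have "eps^2 * L = (eps * sqrt (mu * L))^2 / mu"
      using assms(2,3) by (simp add: power_mult_distrib)
    also have "\<dots> \<le> s^2 / mu"
      using assms by (intro divide_right_mono power_mono) auto
    also have "s^2 / mu = s * \<delta>" unfolding \<delta>_def by (simp add: power2_eq_square)
    finally have "eps * L / 3 \<le> s * \<delta> / 3" by simp
    also have "\<dots> \<le> s * \<delta> / (2 + \<delta>)"
      using False s \<delta> by (intro divide_left_mono) auto
    finally show ?thesis .
  qed
  ultimately show ?thesis unfolding \<delta>_def by linarith
qed

lemma two_less_sfun:
  assumes "2 \<le> n" "3 < eps"
  shows "2 < sfun n eps mu"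
proof -
  have "2/3 \<le> ln (2::real)" using ln_one_plus_ge_rational[of 1] by simp
  also have "\<dots> \<le> ln (real n)" using assms(1) by simp
  finally have "3 * (2/3) < eps * ln (real n)" using assms(2) by (intro mult_less_le_imp_less) auto
  also have "\<dots> \<le> sfun n eps mu" unfolding sfun_def using assms(2) by (intro mult_left_mono) auto
  finally show ?thesis by simp
qed

text \<open>
  Chernoff's choice \<open>ln (1 + s / \<mu>)\<close> for \<open>\<mu> = W * (1 - p)\<close> and \<open>s = sfun n eps \<mu>\<close>;
  the \<open>max 0\<close> only matters for junk arguments, where it keeps the value nonnegative.
\<close>

definition chernoff_lambda :: "nat \<Rightarrow> real \<Rightarrow> nat \<Rightarrow> real \<Rightarrow> real" where
  "chernoff_lambda n eps W p = ln (1 + max 0 (sfun n eps (W * (1 - p)) / (W * (1 - p))))"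

lemma chernoff_lambda_nonneg: "0 \<le> chernoff_lambda n eps W p"
  by (simp add: chernoff_lambda_def)

lemma exp_mart_chernoff_ge_1:
  assumes n: "2 \<le> n" and eps: "3 < eps" and p: "0 \<le> p" "p < 1" and W: "1 \<le> W"
    and Z: "real W * (1 - p) + sfun n eps (real W * (1 - p)) \<le> real (zeros_last H W)"
  shows "1 \<le> real n powr (- eps / 3) * exp_mart (chernoff_lambda n eps W p) p H W"
proof -
  define mu s L lam where "mu = real W * (1 - p)" and "s = sfun n eps mu"
    and "L = ln (real n)" and "lam = chernoff_lambda n eps W p"
  have L: "0 < L" unfolding L_def using n by simp
  have mu: "0 < mu" unfolding mu_def using p W by simp
  have s1: "eps * L \<le> s" and s2: "eps * sqrt (mu * L) \<le> s"
    unfolding s_def sfun_def L_def using eps by (auto intro: mult_left_mono)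
  have s: "0 \<le> s" using s1 eps L by (smt (verit) mult_pos_pos)
  have lam: "lam = ln (1 + s / mu)"
    using s mu unfolding lam_def chernoff_lambda_def mu_def[symmetric] s_def[symmetric] by simp
  then have exp_lam: "exp lam = 1 + s / mu"
    using s mu by (simp add: add_pos_nonneg)
  have c: "p + (1 - p) * exp lam = 1 + (1 - p) * (s / mu)"
    unfolding exp_lam by (simp add: algebra_simps)
  have "(p + (1 - p) * exp lam) ^ W \<le> exp ((1 - p) * (s / mu)) ^ W"
    unfolding c using p s mu by (intro power_mono) (auto simp: exp_ge_add_one_self)
  also have "\<dots> = exp (mu * (s / mu))"
    unfolding mu_def by (simp add: exp_of_nat_mult[symmetric] mult.assoc)
  also have "\<dots> = exp s"
    using mu by simp
  also have "\<dots> \<le> exp (- eps / 3 * L) * exp (lam * (mu + s))"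
    using chernoff_exponent_ge[of eps L mu s] eps L mu s1 s2
    by (simp add: exp_add[symmetric] lam)
  also have "\<dots> \<le> real n powr (- eps / 3) * exp (lam * real (zeros_last H W))"
    using Z chernoff_lambda_nonneg[of n eps W p] n
    unfolding mu_def s_def lam_def L_def powr_def by (auto intro: mult_left_mono)
  finally have "(p + (1 - p) * exp lam) ^ W \<le>
      real n powr (- eps / 3) * exp (lam * real (zeros_last H W))" .
  moreover have "0 < p + (1 - p) * exp lam"
    unfolding c using p s mu by (simp add: add_pos_nonneg)
  ultimately show ?thesis
    unfolding exp_mart_def lam_def[symmetric] by (simp add: le_divide_eq)
qed

lemma exp_mart_snoc_chernoff_ge_1:
  assumes "2 \<le> n" "3 < eps" "0 \<le> p" "p < 1" "1 \<le> W" "W \<le> Suc (length H)"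
    and "real W * (1 - p) + sfun n eps (real W * (1 - p)) \<le> real (zeros_last (H @ [b]) W)"
  defines "lam \<equiv> chernoff_lambda n eps W p"
  shows "1 \<le> ennreal (real n powr (- eps / 3)) * ennreal (exp_mart lam p H (W - 1)) *
    ennreal (exp_mart lam p [b] 1)"
proof -
  have "1 \<le> real n powr (- eps / 3) * exp_mart lam p (H @ [b]) W"
    using exp_mart_chernoff_ge_1[OF assms(1-5,7)] unfolding lam_def .
  also have "\<dots> = real n powr (- eps / 3) * exp_mart lam p H (W - 1) * exp_mart lam p [b] 1"
    using exp_mart_snoc[of "W - 1" H] assms(5,6) by simp
  finally show ?thesis
    using assms(3,4) by (simp add: ennreal_mult[symmetric] exp_mart_nonneg ennreal_1[symmetric] del: ennreal_1)
qed

section \<open>The sig-cGA on DLB\<close>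

type_synonym cga_state = "(real list \<times> bool list list) \<times> bool"

definition step_result :: "nat \<Rightarrow> real \<Rightarrow> real list \<Rightarrow> bool list list \<Rightarrow> bool list
    \<Rightarrow> cga_state" where
  "step_result n eps taus Hs z =
     (let new = map (\<lambda>i. upd n eps (taus ! i) (Hs ! i) (z ! i)) [0..<n];
          taus' = map fst new; Hs' = map snd new
      in ((taus', Hs'), (\<exists>i<n. taus' ! i < taus ! i)))"

lemma sig_cga_step_eq:
  "sig_cga_step n eps (taus, Hs) = map_pmf (step_result n eps taus Hs) (winner_pmf n taus)"
  unfolding sig_cga_step_def winner_pmf_def step_result_def
  by (simp add: map_bind_pmf map_pmf_def bind_assoc_pmf Let_def)

lemma step_result_nth:
  assumes "i < n"
  shows "fst (fst (step_result n eps taus Hs z)) ! i = fst (upd n eps (taus ! i) (Hs ! i) (z ! i))"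
    and "snd (fst (step_result n eps taus Hs z)) ! i = snd (upd n eps (taus ! i) (Hs ! i) (z ! i))"
  using assms by (simp_all add: step_result_def Let_def)

lemma length_step_result:
  "length (fst (fst (step_result n eps taus Hs z))) = n"
  "length (snd (fst (step_result n eps taus Hs z))) = n"
  by (simp_all add: step_result_def Let_def)

lemma snd_step_result:
  "snd (step_result n eps taus Hs z) \<longleftrightarrow>
     (\<exists>i<n. fst (upd n eps (taus ! i) (Hs ! i) (z ! i)) < taus ! i)"
  by (auto simp: step_result_def Let_def)

lemma snd_upd: "snd (upd n eps t H b) = (if fst (upd n eps t H b) = t then H @ [b] else [])"
  by (simp add: upd_def Let_def)

lemma upd_not_decreasing:
  assumes "2 \<le> n" "t = 1/2 \<or> t = 1 - 1 / real n" "\<not> fst (upd n eps t H b) < t"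
  shows "fst (upd n eps t H b) = 1/2 \<or> fst (upd n eps t H b) = 1 - 1 / real n"
proof -
  define q where "q = 1 / real n"
  have "q \<le> 1 / 2" using assms(1) unfolding q_def by (simp add: field_simps)
  moreover have "fst (upd n eps t H b) \<in> {1 - q, q, t}"
    unfolding q_def by (simp add: upd_def Let_def split: sigres.split)
  ultimately show ?thesis
    using assms(2,3) unfolding q_def[symmetric] by auto
qed

lemma upd_decreasing_imp_zeros:
  assumes "fst (upd n eps t H b) < t" "t \<le> 1 - 1 / real n"
  shows "\<exists>m. 2^m \<le> length (H @ [b]) \<and>
           2^m * (1 - t) + sfun n eps (2^m * (1 - t)) \<le> real (zeros_last (H @ [b]) (2^m))"
  using assms by (auto simp: upd_def Let_def sig_def split: sigres.splits if_splits)

definition run_invariant :: "nat \<Rightarrow> nat \<Rightarrow> cga_state \<Rightarrow> bool" where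
  "run_invariant n u s = (case s of ((taus, Hs), d) \<Rightarrow>
     length taus = n \<and> length Hs = n \<and> (\<forall>j<n. length (Hs ! j) \<le> u) \<and>
     (\<not> d \<longrightarrow> (\<forall>j<n. taus ! j = 1/2 \<or> taus ! j = 1 - 1 / real n)))"

lemma run_invariant_frequencies:
  assumes "run_invariant n u ((taus, Hs), False)" "2 \<le> n" "j < n"
  shows "1/2 \<le> taus ! j" "taus ! j \<le> 1 - 1 / real n" "taus ! j < 1"
proof -
  have "1 / real n \<le> 1 / 2" "0 < 1 / real n" using assms(2) by (auto simp: field_simps)
  moreover have "taus ! j = 1/2 \<or> taus ! j = 1 - 1 / real n"
    using assms(1,3) unfolding run_invariant_def by auto
  ultimately show "1/2 \<le> taus ! j" "taus ! j \<le> 1 - 1 / real n" "taus ! j < 1"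
    by linarith+
qed

lemma run_invariant_frequencies_set:
  assumes "run_invariant n u ((taus, Hs), False)" "2 \<le> n"
  shows "length taus = n" "\<forall>t\<in>set taus. 1/2 \<le> t \<and> t \<le> 1"
  using assms(1) run_invariant_frequencies(1,3)[OF assms]
  by (auto simp: run_invariant_def in_set_conv_nth less_imp_le)

lemma set_pmf_sig_cga_run_SucE:
  assumes "s \<in> set_pmf (sig_cga_run n eps (Suc u))"
  obtains taus Hs d z where "((taus, Hs), d) \<in> set_pmf (sig_cga_run n eps u)"
    and "z \<in> set_pmf (winner_pmf n taus)"
    and "s = (fst (step_result n eps taus Hs z), d \<or> snd (step_result n eps taus Hs z))"
proof -
  from assms obtain st d where "(st, d) \<in> set_pmf (sig_cga_run n eps u)"
    and "s \<in> set_pmf (map_pmf (\<lambda>(st', d'). (st', d \<or> d')) (sig_cga_step n eps st))"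
    by auto
  with that show ?thesis
    by (cases st) (auto simp: sig_cga_step_eq case_prod_beta)
qed

lemma run_invariant_sig_cga_run:
  assumes "2 \<le> n" "s \<in> set_pmf (sig_cga_run n eps u)"
  shows "run_invariant n u s"
  using assms(2)
proof (induction u arbitrary: s)
  case 0
  then show ?case by (simp add: run_invariant_def sig_cga_init_def)
next
  case (Suc u)
  obtain taus Hs d z where prev: "((taus, Hs), d) \<in> set_pmf (sig_cga_run n eps u)"
    and s: "s = (fst (step_result n eps taus Hs z), d \<or> snd (step_result n eps taus Hs z))"
    using Suc.prems by (blast elim: set_pmf_sig_cga_run_SucE)
  have I: "run_invariant n u ((taus, Hs), d)" using Suc.IH prev .
  have "length (snd (fst (step_result n eps taus Hs z)) ! j) \<le> Suc u" if "j < n" for j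
    using I that by (auto simp: step_result_nth snd_upd run_invariant_def)
  moreover have "fst (fst (step_result n eps taus Hs z)) ! j = 1/2 \<or>
      fst (fst (step_result n eps taus Hs z)) ! j = 1 - 1 / real n"
    if "j < n" "\<not> (d \<or> snd (step_result n eps taus Hs z))" for j
  proof -
    have "taus ! j = 1/2 \<or> taus ! j = 1 - 1 / real n"
      and "\<not> fst (upd n eps (taus ! j) (Hs ! j) (z ! j)) < taus ! j"
      using I that unfolding run_invariant_def snd_step_result by auto
    from upd_not_decreasing[OF assms(1) this] show ?thesis
      using step_result_nth(1)[OF that(1)] by simp
  qed
  ultimately show ?case
    unfolding s run_invariant_def case_prod_beta fst_conv snd_conv
    using length_step_result[of n eps taus Hs z] by blast
qed

text \<open>
  Resetting the \<open>i\<close>-th history makes it shorter than \<open>l\<close> and thereby kills the potential;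
  this is why \<open>potential i lamf l\<close> is a supermartingale although \<open>lamf\<close> depends on the frequency.
\<close>

definition potential :: "nat \<Rightarrow> (real \<Rightarrow> real) \<Rightarrow> nat \<Rightarrow> cga_state \<Rightarrow> ennreal" where
  "potential i lamf l s = (case s of ((taus, Hs), d) \<Rightarrow>
     if \<not> d \<and> l \<le> length (Hs ! i)
     then ennreal (exp_mart (lamf (taus ! i)) (taus ! i) (Hs ! i) l) else 0)"

lemma potential_step_result_le:
  assumes "i < n" "\<not> d" "l \<le> length (Hs ! i)" "0 \<le> taus ! i" "taus ! i \<le> 1"
  shows "potential i lamf (Suc l)
      (fst (step_result n eps taus Hs z), d \<or> snd (step_result n eps taus Hs z))
    \<le> ennreal (exp_mart (lamf (taus ! i)) (taus ! i) (Hs ! i) l) *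
       ennreal (exp_mart (lamf (taus ! i)) (taus ! i) [z ! i] 1)"
proof (cases "snd (upd n eps (taus ! i) (Hs ! i) (z ! i)) = []")
  case False
  then have "fst (upd n eps (taus ! i) (Hs ! i) (z ! i)) = taus ! i"
    and "snd (upd n eps (taus ! i) (Hs ! i) (z ! i)) = Hs ! i @ [z ! i]"
    by (metis snd_upd)+
  then show ?thesis
    using assms
    by (auto simp: potential_def step_result_nth exp_mart_snoc ennreal_mult exp_mart_nonneg
        case_prod_beta)
qed (use assms in \<open>auto simp: potential_def step_result_nth case_prod_beta\<close>)

lemma nn_integral_exp_mart_winner_le_1:
  assumes "even n" "length taus = n" "\<forall>t\<in>set taus. 1/2 \<le> t \<and> t \<le> 1" "i < n" "0 \<le> lam"
  shows "(\<integral>\<^sup>+z. ennreal (exp_mart lam (taus ! i) [z ! i] 1) \<partial>winner_pmf n taus) \<le> 1"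
proof -
  have "pmf (map_pmf (\<lambda>z. z ! i) (winner_pmf n taus)) False \<le> 1 - taus ! i"
    using pmf_winner_pmf_nth_False_le[of taus i] assms(1-4) by simp
  moreover have "taus ! i \<le> 1" using assms(2-4) by simp
  ultimately have "(\<integral>\<^sup>+b. ennreal (exp_mart lam (taus ! i) [b] 1)
      \<partial>map_pmf (\<lambda>z. z ! i) (winner_pmf n taus)) \<le> 1"
    by (rule nn_integral_exp_mart_le_1[OF _ _ assms(5)])
  then show ?thesis by simp
qed

lemma potential_supermartingale:
  assumes "even n" "2 \<le> n" "run_invariant n u ((taus, Hs), d)" "i < n" "\<forall>p. 0 \<le> lamf p"
  shows "(\<integral>\<^sup>+s. potential i lamf (Suc l) (fst s, d \<or> snd s) \<partial>sig_cga_step n eps (taus, Hs))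
    \<le> potential i lamf l ((taus, Hs), d)"
proof (cases "\<not> d \<and> l \<le> length (Hs ! i)")
  case False
  have "potential i lamf (Suc l)
      (fst (step_result n eps taus Hs z), d \<or> snd (step_result n eps taus Hs z)) = 0" for z
  proof -
    have "length (snd (upd n eps (taus ! i) (Hs ! i) (z ! i))) \<le> Suc (length (Hs ! i))"
      by (simp add: snd_upd)
    then show ?thesis
      using False assms(4) by (auto simp: potential_def step_result_nth case_prod_beta)
  qed
  then show ?thesis by (simp add: sig_cga_step_eq)
next
  case True
  define t H where "t = taus ! i" and "H = Hs ! i"
  have "run_invariant n u ((taus, Hs), False)" using assms(3) True by simp
  note taus = run_invariant_frequencies_set[OF this assms(2)]
  then have t: "1/2 \<le> t" "t \<le> 1" unfolding t_def using assms(4) by auto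
  have "(\<integral>\<^sup>+s. potential i lamf (Suc l) (fst s, d \<or> snd s) \<partial>sig_cga_step n eps (taus, Hs))
      \<le> (\<integral>\<^sup>+z. ennreal (exp_mart (lamf t) t H l) * ennreal (exp_mart (lamf t) t [z ! i] 1)
          \<partial>winner_pmf n taus)"
    unfolding sig_cga_step_eq nn_integral_map_pmf t_def H_def
    using True t assms(4) by (intro nn_integral_mono potential_step_result_le) (auto simp: t_def)
  also have "\<dots> = ennreal (exp_mart (lamf t) t H l) *
      (\<integral>\<^sup>+z. ennreal (exp_mart (lamf t) t [z ! i] 1) \<partial>winner_pmf n taus)"
    by (rule nn_integral_cmult) simp
  also have "\<dots> \<le> ennreal (exp_mart (lamf t) t H l)"
    using nn_integral_exp_mart_winner_le_1[OF assms(1) taus assms(4)] assms(5)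
    by (auto simp: t_def intro: mult_left_le)
  also have "\<dots> = potential i lamf l ((taus, Hs), d)"
    using True by (simp add: potential_def t_def H_def)
  finally show ?thesis .
qed

lemma nn_integral_sig_cga_run_Suc:
  "(\<integral>\<^sup>+s. f s \<partial>sig_cga_run n eps (Suc u)) =
   (\<integral>\<^sup>+x. (\<integral>\<^sup>+s. f (fst s, snd x \<or> snd s) \<partial>sig_cga_step n eps (fst x)) \<partial>sig_cga_run n eps u)"
  by (simp add: case_prod_beta)

lemma nn_integral_potential_le_1:
  assumes "even n" "2 \<le> n" "i < n" "\<forall>p. 0 \<le> lamf p"
  shows "(\<integral>\<^sup>+s. potential i lamf l s \<partial>sig_cga_run n eps u) \<le> 1"
proof (induction u arbitrary: l)
  case 0
  then show ?case using assms(3) by (simp add: potential_def sig_cga_init_def zeros_last_def exp_mart_def)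
next
  case (Suc u)
  show ?case
  proof (cases l)
    case 0
    have "potential i lamf 0 s \<le> 1" for s
      by (simp add: potential_def exp_mart_def zeros_last_def split: prod.split)
    then have "(\<integral>\<^sup>+s. potential i lamf l s \<partial>sig_cga_run n eps (Suc u))
        \<le> (\<integral>\<^sup>+s. 1 \<partial>sig_cga_run n eps (Suc u))"
      unfolding 0 by (intro nn_integral_mono)
    then show ?thesis by simp
  next
    case (Suc l')
    have "(\<integral>\<^sup>+s. potential i lamf l s \<partial>sig_cga_run n eps (Suc u))
        \<le> (\<integral>\<^sup>+x. potential i lamf l' x \<partial>sig_cga_run n eps u)"
      unfolding nn_integral_sig_cga_run_Suc Suc
    proof (intro nn_integral_mono_AE AE_pmfI)
      fix x assume "x \<in> set_pmf (sig_cga_run n eps u)"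
      then have "run_invariant n u x" by (rule run_invariant_sig_cga_run[OF assms(2)])
      then show "(\<integral>\<^sup>+s. potential i lamf (Suc l') (fst s, snd x \<or> snd s) \<partial>sig_cga_step n eps (fst x))
          \<le> potential i lamf l' x"
        using potential_supermartingale[OF assms(1,2) _ assms(3,4)] by (cases x) auto
    qed
    also have "\<dots> \<le> 1" by (rule Suc.IH)
    finally show ?thesis .
  qed
qed

lemma decrease_imp_potential_ge_1:
  assumes n: "2 \<le> n" and eps: "3 < eps" and inv: "run_invariant n u ((taus, Hs), False)"
    and short: "\<forall>j<n. Suc (length (Hs ! j)) < 2 ^ Suc K"
    and dec: "snd (step_result n eps taus Hs z)"
  shows "\<exists>j<n. \<exists>m\<in>{1..K}. 1 \<le> ennreal (real n powr (- eps / 3)) *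
      potential j (chernoff_lambda n eps (2^m)) (2^m - 1) ((taus, Hs), False) *
      ennreal (exp_mart (chernoff_lambda n eps (2^m) (taus ! j)) (taus ! j) [z ! j] 1)"
proof -
  obtain j where j: "j < n" and "fst (upd n eps (taus ! j) (Hs ! j) (z ! j)) < taus ! j"
    using dec unfolding snd_step_result by blast
  moreover note t = run_invariant_frequencies[OF inv n j]
  ultimately obtain m where m: "2^m \<le> length (Hs ! j @ [z ! j])"
    and Z: "2^m * (1 - taus ! j) + sfun n eps (2^m * (1 - taus ! j))
            \<le> real (zeros_last (Hs ! j @ [z ! j]) (2^m))"
    using upd_decreasing_imp_zeros by blast
  have "m \<noteq> 0"
  proof
    assume "m = 0"
    moreover have "zeros_last (Hs ! j @ [z ! j]) 1 \<le> 1" by (simp add: zeros_last_def)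
    ultimately show False using Z t(3) two_less_sfun[OF n eps, of "1 - taus ! j"] by simp
  qed
  moreover have "m \<le> K"
    using m short j power_less_imp_less_exp[of "2::nat" m "Suc K"] by fastforce
  moreover have "1 \<le> ennreal (real n powr (- eps / 3)) *
      potential j (chernoff_lambda n eps (2^m)) (2^m - 1) ((taus, Hs), False) *
      ennreal (exp_mart (chernoff_lambda n eps (2^m) (taus ! j)) (taus ! j) [z ! j] 1)"
    using exp_mart_snoc_chernoff_ge_1[OF n eps _ t(3), of "2^m" "Hs ! j" "z ! j"] m Z t(1)
    by (simp add: potential_def)
  ultimately show ?thesis
    using j by (intro exI[of _ j] conjI bexI[of _ m]) auto
qed

text \<open>
  The union bound over positions \<open>j\<close> and scales \<open>2^m\<close>: the step itself supplies the
  \<open>2^m\<close>-th history entry, so the potential is taken over the last \<open>2^m - 1\<close> entries.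
\<close>

definition potential_sum :: "nat \<Rightarrow> real \<Rightarrow> nat \<Rightarrow> cga_state \<Rightarrow> ennreal" where
  "potential_sum n eps K s = (\<Sum>j<n. \<Sum>m\<in>{1..K}.
     ennreal (real n powr (- eps / 3)) * potential j (chernoff_lambda n eps (2^m)) (2^m - 1) s)"

lemma decrease_step_le:
  assumes "even n" "2 \<le> n" "3 < eps" "run_invariant n u ((taus, Hs), False)"
    "\<forall>j<n. Suc (length (Hs ! j)) < 2 ^ Suc K"
  shows "(\<integral>\<^sup>+s. indicator {s. snd s} s \<partial>sig_cga_step n eps (taus, Hs))
    \<le> potential_sum n eps K ((taus, Hs), False)"
proof -
  define \<beta> where "\<beta> = ennreal (real n powr (- eps / 3))"
  define P where "P j m = potential j (chernoff_lambda n eps (2^m)) (2^m - 1) ((taus, Hs), False)"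
    for j m :: nat
  define E where "E j m z = ennreal (exp_mart (chernoff_lambda n eps (2^m) (taus ! j)) (taus ! j) [z ! j] 1)"
    for j m :: nat and z :: "bool list"
  have "indicator {s. snd s} (step_result n eps taus Hs z) \<le> (\<Sum>j<n. \<Sum>m\<in>{1..K}. \<beta> * P j m * E j m z)"
    for z
  proof (cases "snd (step_result n eps taus Hs z)")
    case True
    then obtain j m where "j < n" "m \<in> {1..K}" "1 \<le> \<beta> * P j m * E j m z"
      using decrease_imp_potential_ge_1[OF assms(2-5)] unfolding \<beta>_def P_def E_def by blast
    note \<open>1 \<le> \<beta> * P j m * E j m z\<close>
    also have "\<beta> * P j m * E j m z \<le> (\<Sum>m\<in>{1..K}. \<beta> * P j m * E j m z)"
      using \<open>m \<in> {1..K}\<close> by (intro member_le_sum) auto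
    also have "\<dots> \<le> (\<Sum>j<n. \<Sum>m\<in>{1..K}. \<beta> * P j m * E j m z)"
      using \<open>j < n\<close> by (intro member_le_sum) auto
    finally show ?thesis using True by simp
  qed simp
  then have "(\<integral>\<^sup>+s. indicator {s. snd s} s \<partial>sig_cga_step n eps (taus, Hs))
      \<le> (\<integral>\<^sup>+z. (\<Sum>j<n. \<Sum>m\<in>{1..K}. \<beta> * P j m * E j m z) \<partial>winner_pmf n taus)"
    unfolding sig_cga_step_eq nn_integral_map_pmf by (intro nn_integral_mono)
  also have "\<dots> = (\<Sum>j<n. \<Sum>m\<in>{1..K}. \<beta> * P j m * (\<integral>\<^sup>+z. E j m z \<partial>winner_pmf n taus))"
    by (simp add: nn_integral_sum nn_integral_cmult E_def)
  also have "\<dots> \<le> (\<Sum>j<n. \<Sum>m\<in>{1..K}. \<beta> * P j m * 1)"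
    unfolding E_def using assms(1) run_invariant_frequencies_set[OF assms(4,2)]
    by (intro sum_mono mult_left_mono nn_integral_exp_mart_winner_le_1 chernoff_lambda_nonneg) auto
  finally show ?thesis unfolding \<beta>_def P_def potential_sum_def by simp
qed

lemma nn_integral_decrease_step_le:
  assumes "even n" "2 \<le> n" "3 < eps" "run_invariant n u ((taus, Hs), d)" "Suc u < 2 ^ Suc K"
  shows "(\<integral>\<^sup>+s. indicator {s. snd s} (fst s, d \<or> snd s) \<partial>sig_cga_step n eps (taus, Hs))
    \<le> indicator {s. snd s} ((taus, Hs), d) + potential_sum n eps K ((taus, Hs), d)"
proof (cases d)
  case False
  have "\<forall>j<n. Suc (length (Hs ! j)) < 2 ^ Suc K"
    using assms(4,5) unfolding run_invariant_def by fastforce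
  with False show ?thesis
    using decrease_step_le[OF assms(1-3)] assms(4) by (simp add: indicator_def)
qed simp

lemma nn_integral_potential_sum_le:
  assumes "even n" "2 \<le> n"
  shows "(\<integral>\<^sup>+s. potential_sum n eps K s \<partial>sig_cga_run n eps u)
    \<le> ennreal (real n * real K * real n powr (- eps / 3))"
proof -
  have "(\<integral>\<^sup>+s. potential_sum n eps K s \<partial>sig_cga_run n eps u) =
      (\<Sum>j<n. \<Sum>m\<in>{1..K}. ennreal (real n powr (- eps / 3)) *
         (\<integral>\<^sup>+s. potential j (chernoff_lambda n eps (2^m)) (2^m - 1) s \<partial>sig_cga_run n eps u))"
    unfolding potential_sum_def by (simp add: nn_integral_sum nn_integral_cmult)
  also have "\<dots> \<le> (\<Sum>j<n. \<Sum>m\<in>{1..K}. ennreal (real n powr (- eps / 3)) * 1)"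
    using assms
    by (intro sum_mono mult_left_mono nn_integral_potential_le_1 chernoff_lambda_nonneg allI) auto
  also have "\<dots> = ennreal (real n * real K * real n powr (- eps / 3))"
    by (simp add: ennreal_of_nat_eq_real_of_nat ennreal_mult mult.assoc)
  finally show ?thesis .
qed

lemma nn_integral_decrease_sig_cga_run_le:
  assumes "even n" "2 \<le> n" "3 < eps" "u < 2 ^ Suc K"
  shows "(\<integral>\<^sup>+s. indicator {s. snd s} s \<partial>sig_cga_run n eps u)
    \<le> ennreal (real u * (real n * real K * real n powr (- eps / 3)))"
  using assms(4)
proof (induction u)
  case (Suc u)
  define c where "c = real n * real K * real n powr (- eps / 3)"
  have "(\<integral>\<^sup>+s. indicator {s. snd s} s \<partial>sig_cga_run n eps (Suc u))
      \<le> (\<integral>\<^sup>+x. indicator {s. snd s} x + potential_sum n eps K x \<partial>sig_cga_run n eps u)"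
    unfolding nn_integral_sig_cga_run_Suc
  proof (intro nn_integral_mono_AE AE_pmfI)
    fix x assume "x \<in> set_pmf (sig_cga_run n eps u)"
    then have "run_invariant n u x" by (rule run_invariant_sig_cga_run[OF assms(2)])
    then show "(\<integral>\<^sup>+s. indicator {s. snd s} (fst s, snd x \<or> snd s) \<partial>sig_cga_step n eps (fst x))
        \<le> indicator {s. snd s} x + potential_sum n eps K x"
      using nn_integral_decrease_step_le[OF assms(1-3) _ Suc.prems] by (cases x) auto
  qed
  also have "\<dots> \<le> ennreal (real u * c) + ennreal c"
    using Suc nn_integral_potential_sum_le[OF assms(1,2)] unfolding c_def
    by (simp add: nn_integral_add add_mono)
  also have "\<dots> = ennreal (real (Suc u) * c)"
    using c_def by (simp add: ennreal_plus[symmetric] algebra_simps del: ennreal_plus)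
  finally show ?case unfolding c_def .
qed simp

lemma prob_decrease_sig_cga_run_le:
  assumes "even n" "2 \<le> n" "3 < eps" "u < 2 ^ Suc K"
  shows "measure_pmf.prob (sig_cga_run n eps u) {(st, d). d}
    \<le> real u * real n powr (1 - eps / 3) * real K"
proof -
  have "ennreal (measure_pmf.prob (sig_cga_run n eps u) {(st, d). d})
      = (\<integral>\<^sup>+s. indicator {s. snd s} s \<partial>sig_cga_run n eps u)"
    by (simp add: measure_pmf.emeasure_eq_measure[symmetric] case_prod_beta')
  also have "\<dots> \<le> ennreal (real u * (real n * real K * real n powr (- eps / 3)))"
    by (rule nn_integral_decrease_sig_cga_run_le[OF assms])
  finally have "measure_pmf.prob (sig_cga_run n eps u) {(st, d). d}
      \<le> real u * (real n * real K * real n powr (- eps / 3))"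
    by (simp add: ennreal_le_iff)
  also have "\<dots> = real u * real n powr (1 - eps / 3) * real K"
    using powr_add[of "real n" 1 "- eps / 3"] assms(2) by simp
  finally show ?thesis .
qed

lemma less_two_power_Suc_floor_log:
  assumes "0 < k"
  shows "k < 2 ^ Suc (nat \<lfloor>log 2 (real k)\<rfloor>)"
proof -
  have "\<lfloor>log 2 (real k)\<rfloor> = int (nat \<lfloor>log 2 (real k)\<rfloor>)"
    using assms by simp
  then show ?thesis
    using floor_log_nat_eq_powr_iff[of 2 k "nat \<lfloor>log 2 (real k)\<rfloor>"] assms by simp
qed

theorem lemma23:
  fixes n k :: nat and eps :: real
  assumes "even n" and "n > 0" and "eps > 3"
  shows "measure_pmf.prob (sig_cga_run n eps k) {(st, d). d}
           \<le> real k * real n powr (1 - eps / 3) * log 2 (real k)"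
proof (cases "k = 0")
  case False
  define K where "K = nat \<lfloor>log 2 (real k)\<rfloor>"
  have "2 \<le> n" using assms(1,2) by presburger
  moreover have "k < 2 ^ Suc K" unfolding K_def using False by (intro less_two_power_Suc_floor_log) simp
  ultimately have "measure_pmf.prob (sig_cga_run n eps k) {(st, d). d}
      \<le> real k * real n powr (1 - eps / 3) * real K"
    using prob_decrease_sig_cga_run_le assms by blast
  also have "\<dots> \<le> real k * real n powr (1 - eps / 3) * log 2 (real k)"
    using False unfolding K_def by (intro mult_left_mono) auto
  finally show ?thesis .
qed simp

end
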